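(* Let $K$ be a field of characteristic $0$, $t$ a variable, $\theta=t\frac{d}{dt}$, $g':=\theta g$, and let $\mathcal{L}=\theta^n+\sum_{i=0}^{n-1}a_i\theta^i$ with $a_i\in K(t)$, $n\geq1$. Let $\beta$ be a $\beta$-factor of $\mathcal{L}$ (a non-zero solution, in some differential field extension, of $n\beta'=2a_{n-1}\beta$). Then $\mathcal{L}$ is self-adjoint and $\beta$ can be chosen in $K(t)$ if and only if the differential module $\mathcal{M}_{\mathcal{L}}$ is polarizable.
   Context: The formal adjoint of $\mathcal{L}$ is $\mathcal{L}^*=(-1)^n\theta^n+\sum_{i=0}^{n-1}(-1)^i\theta^i a_i$ (here $\theta^i a_i$ is a composition of operators). $\mathcal{L}$ is called self-adjoint if $\mathcal{L}^*=(-1)^n\beta\mathcal{L}\beta^{-1}$ as operators. $\mathcal{M}_{\mathcal{L}}:=K(t)[\theta]/K(t)[\theta]\mathcal{L}$ is the left $K(t)[\theta]$-module with generator $\eta$ = image of $1$; it is free over $K(t)$ with basis $\eta^{(i)}:=\theta^i\eta$, $0\le i\le n-1$. $\operatorname{Fil}^i\subset\mathcal{M}_{\mathcal{L}}$ is the $K(t)$-span of $\eta^{(j)}$, $0\le j\le n-1-i$. A pairing $\langle\,,\rangle:\mathcal{M}_{\mathcal{L}}\times\mathcal{M}_{\mathcal{L}}\to K(t)$ is horizontal if $\theta\langle x,y\rangle=\langle\theta x,y\rangle+\langle x,\theta y\rangle$. A polarization is a $K(t)$-bilinear, $(-1)^{n+1}$-symmetric, non-degenerate horizontal pairing with $\langle\operatorname{Fil}^i,\operatorname{Fil}^{n-i}\rangle=0$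 for $0\le i\le n-1$; $\mathcal{M}_{\mathcal{L}}$ is polarizable if one exists. *)

theory Defs
  imports "HOL-Computational_Algebra.Computational_Algebra"
begin

text \<open>The rational function field K(t) is modelled as the fraction field
  of K[t], type 'k poly fract.  theta = t d/dt.\<close>

definition theta_poly :: "'k::field_char_0 poly \<Rightarrow> 'k poly" where
  "theta_poly p = [:0, 1:] * pderiv p"

text \<open>theta on K(t): theta(p/q) = (theta p * q - p * theta q) / q^2
  (independent of the representative p/q, q nonzero).\<close>
definition theta :: "'k::field_char_0 poly fract \<Rightarrow> 'k poly fract" where
  "theta x = (THE y. \<exists>p q. q \<noteq> 0 \<and> x = Fract p q \<and>
      y = Fract (theta_poly p * q - p * theta_poly q) (q * q))"

text \<open>Differential operators in K(t)[theta]: the operator sum c_i theta^i is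
  represented by the polynomial with coefficients c_i (only as coefficient
  container; multiplication is the twisted one below).\<close>
type_synonym 'k diffop = "'k poly fract poly"

text \<open>Left multiplication by theta: theta * (sum c_j theta^j) = sum (theta c_j) theta^j + c_j theta^(j+1).\<close>
definition theta_op :: "'k::field_char_0 diffop \<Rightarrow> 'k diffop" where
  "theta_op Q = (\<Sum>j\<le>degree Q. monom (theta (coeff Q j)) j) + pCons 0 Q"

definition op_mult :: "'k::field_char_0 diffop \<Rightarrow> 'k diffop \<Rightarrow> 'k diffop" where
  "op_mult P Q = (\<Sum>i\<le>degree P. smult (coeff P i) ((theta_op ^^ i) Q))"

definition adjoint :: "'k::field_char_0 diffop \<Rightarrow> 'k diffop" where
  "adjoint L = (\<Sum>i\<le>degree L. smult ((-1) ^ i) (op_mult (monom 1 i) [:coeff L i:]))"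

definition self_adjoint_wrt :: "'k::field_char_0 diffop \<Rightarrow> 'k poly fract \<Rightarrow> bool" where
  "self_adjoint_wrt L \<beta> \<longleftrightarrow>
     adjoint L = smult ((-1) ^ degree L) (op_mult [:\<beta>:] (op_mult L [:inverse \<beta>:]))"

definition beta_factor :: "'k::field_char_0 diffop \<Rightarrow> 'k poly fract \<Rightarrow> bool" where
  "beta_factor L \<beta> \<longleftrightarrow> \<beta> \<noteq> 0 \<and>
     of_nat (degree L) * theta \<beta> = 2 * coeff L (degree L - 1) * \<beta>"

text \<open>The module M_L = K(t)[theta] / K(t)[theta] L: elements are classes of
  operators modulo the left ideal generated by L.\<close>
definition in_left_ideal :: "'k::field_char_0 diffop \<Rightarrow> 'k diffop \<Rightarrow> bool" where
  "in_left_ideal L P \<longleftrightarrow> (\<exists>Q. P = op_mult Q L)"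

definition mcong :: "'k::field_char_0 diffop \<Rightarrow> 'k diffop \<Rightarrow> 'k diffop \<Rightarrow> bool" where
  "mcong L P P' \<longleftrightarrow> in_left_ideal L (P - P')"

text \<open>Fil^i: class has a representative in the K(t)-span of theta^j eta, j \<le> n-1-i.\<close>
definition in_Fil :: "'k::field_char_0 diffop \<Rightarrow> nat \<Rightarrow> 'k diffop \<Rightarrow> bool" where
  "in_Fil L i P \<longleftrightarrow> (\<exists>P'. mcong L P P' \<and> (\<forall>j. degree L - i \<le> j \<longrightarrow> coeff P' j = 0))"

text \<open>A pairing on M_L is given by a function on representatives which is
  well defined on classes.\<close>
definition polarization :: "'k::field_char_0 diffop \<Rightarrow> ('k diffop \<Rightarrow> 'k diffop \<Rightarrow> 'k poly fract) \<Rightarrow> bool" where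
  "polarization L B \<longleftrightarrow>
     (\<forall>P P' Q. mcong L P P' \<longrightarrow> B P Q = B P' Q \<and> B Q P = B Q P') \<and>
     (\<forall>a P P' Q. B (smult a P + P') Q = a * B P Q + B P' Q \<and>
                 B Q (smult a P + P') = a * B Q P + B Q P') \<and>
     (\<forall>P Q. B Q P = (-1) ^ (degree L + 1) * B P Q) \<and>
     (\<forall>P. (\<forall>Q. B P Q = 0) \<longrightarrow> in_left_ideal L P) \<and>
     (\<forall>P Q. theta (B P Q) = B (theta_op P) Q + B P (theta_op Q)) \<and>
     (\<forall>i < degree L. \<forall>P Q. in_Fil L i P \<longrightarrow> in_Fil L (degree L - i) Q \<longrightarrow> B P Q = 0)"

definition polarizable :: "'k::field_char_0 diffop \<Rightarrow> bool" where
  "polarizable L \<longleftrightarrow> (\<exists>B. polarization L B)"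

end

theory Submission
  imports Defs "HOL-Library.Function_Algebras"
begin

text \<open>Functionals on M_L form a differential module under
  (theta phi)(x) = theta (phi x) - phi (theta x), and the functional eps reading off the
  coefficient of theta^(n-1) eta satisfies L^* eps = 0. A horizontal pairing is determined by
  phi = <eta, _> through <P eta, _> = P phi. For a polarization, the filtration condition forces
  phi = c eps and non-degeneracy forces c \<noteq> 0; then <L^* c^(-1) eta, _> = L^* eps = 0, so
  L^* c^(-1) lies in K(t)[theta] L, and comparing the two top coefficients gives
  L^* c^(-1) = (-1)^n c^(-1) L together with the beta-factor equation for beta = c^(-1).
  Conversely, self-adjointness with beta gives L (beta^(-1) eps) = 0, so
  <P eta, Q eta> = (P beta^(-1) eps)(Q) is well defined. As
  <theta^j eta, theta^k eta> = (-1)^j beta^(-1) [j + k = n - 1] for j + k \<le> n - 1, this pairing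
  satisfies the filtration condition and is non-degenerate, and horizontality propagates its
  symmetry from the pairs <_, eta> to all pairs.\<close>

section \<open>The derivation theta on K(t) and on operators\<close>

lemma theta_poly_add: "theta_poly (p + q) = theta_poly p + theta_poly q"
  by (simp add: theta_poly_def pderiv_add algebra_simps)

lemma theta_poly_mult: "theta_poly (p * q) = theta_poly p * q + p * theta_poly q"
  by (simp add: theta_poly_def pderiv_mult algebra_simps)

lemma theta_Fract:
  assumes q: "q \<noteq> 0"
  shows "theta (Fract p q) = Fract (theta_poly p * q - p * theta_poly q) (q * q)"
  unfolding theta_def
proof (rule the_equality)
  show "\<exists>p' q'. q' \<noteq> 0 \<and> Fract p q = Fract p' q' \<and>
      Fract (theta_poly p * q - p * theta_poly q) (q * q)
        = Fract (theta_poly p' * q' - p' * theta_poly q') (q' * q')"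
    using q by blast
next
  fix y assume "\<exists>p' q'. q' \<noteq> 0 \<and> Fract p q = Fract p' q' \<and>
      y = Fract (theta_poly p' * q' - p' * theta_poly q') (q' * q')"
  then obtain p' q' where q': "q' \<noteq> 0" and e: "Fract p q = Fract p' q'"
    and y: "y = Fract (theta_poly p' * q' - p' * theta_poly q') (q' * q')" by blast
  have e1: "p * q' = p' * q" using e q q' by (simp add: eq_fract)
  have e2: "theta_poly p * q' + p * theta_poly q' = theta_poly p' * q + p' * theta_poly q"
    using arg_cong[OF e1, of theta_poly] by (simp add: theta_poly_mult)
  have "(theta_poly p * q - p * theta_poly q) * (q' * q')
          - (theta_poly p' * q' - p' * theta_poly q') * (q * q)
      = q * q' * (theta_poly p * q' + p * theta_poly q' - (theta_poly p' * q + p' * theta_poly q))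
          - (theta_poly q * q' + theta_poly q' * q) * (p * q' - p' * q)"
    by (simp add: algebra_simps)
  also have "\<dots> = 0" using e1 e2 by simp
  finally show "y = Fract (theta_poly p * q - p * theta_poly q) (q * q)"
    using q q' y by (simp add: eq_fract)
qed

lemma theta_add: "theta (x + y) = theta x + theta y"
proof (cases x; cases y)
  fix a b c d assume "x = Fract a b" "b \<noteq> 0" "y = Fract c d" "d \<noteq> 0"
  then show ?thesis by (simp add: theta_Fract theta_poly_add theta_poly_mult eq_fract algebra_simps)
qed

lemma theta_mult: "theta (x * y) = theta x * y + x * theta y"
proof (cases x; cases y)
  fix a b c d assume "x = Fract a b" "b \<noteq> 0" "y = Fract c d" "d \<noteq> 0"
  then show ?thesis by (simp add: theta_Fract theta_poly_add theta_poly_mult eq_fract algebra_simps)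
qed

lemma theta_0 [simp]: "theta 0 = 0"
  using add_left_imp_eq[of "theta 0" "theta 0" 0] theta_add[of 0 0] by simp

lemma theta_1 [simp]: "theta 1 = 0"
  using add_left_imp_eq[of "theta 1" "theta 1" 0] theta_mult[of 1 1] by simp

lemma theta_minus: "theta (- x) = - theta x"
  using theta_add[of x "- x"] by (simp add: eq_neg_iff_add_eq_0 add.commute)

lemma theta_diff: "theta (x - y) = theta x - theta y"
  using theta_add[of x "- y"] by (simp add: theta_minus)

lemma theta_neg_one_power [simp]: "theta ((-1) ^ i) = 0"
  by (induction i) (simp_all add: theta_mult theta_minus)

lemma coeff_theta_op:
  "coeff (theta_op Q) j = theta (coeff Q j) + (if j = 0 then 0 else coeff Q (j - 1))"
proof -
  have "coeff (\<Sum>k\<le>degree Q. monom (theta (coeff Q k)) k) j = theta (coeff Q j)"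
    by (cases "j \<le> degree Q") (simp_all add: coeff_sum coeff_eq_0)
  then show ?thesis unfolding theta_op_def by (simp add: coeff_pCons split: nat.split)
qed

lemma theta_op_add: "theta_op (P + Q) = theta_op P + theta_op Q"
  by (rule poly_eqI) (simp add: coeff_theta_op theta_add)

lemma theta_op_smult: "theta_op (smult a Q) = smult (theta a) Q + smult a (theta_op Q)"
  by (rule poly_eqI) (simp add: coeff_theta_op theta_mult algebra_simps)

lemma theta_op_monom_one: "theta_op (monom 1 k) = monom 1 (Suc k)"
  by (rule poly_eqI) (auto simp: coeff_theta_op coeff_monom)

section \<open>Differential modules and the dual of K(t)[theta]\<close>

locale diff_module =
  fixes sc :: "'k::field_char_0 poly fract \<Rightarrow> 'm::ab_group_add \<Rightarrow> 'm" and T :: "'m \<Rightarrow> 'm"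
  assumes sc_add_left: "sc (a + b) x = sc a x + sc b x"
    and sc_add_right: "sc a (x + y) = sc a x + sc a y"
    and sc_mult: "sc (a * b) x = sc a (sc b x)"
    and sc_one: "sc 1 x = x"
    and T_add: "T (x + y) = T x + T y"
    and T_sc: "T (sc a x) = sc (theta a) x + sc a (T x)"
begin

lemma sc_zero_left [simp]: "sc 0 x = 0"
  using sc_add_left[of 0 0 x] by simp

lemma sc_zero_right [simp]: "sc a 0 = 0"
  using sc_add_right[of a 0 0] by simp

lemma T_zero [simp]: "T 0 = 0"
  using T_add[of 0 0] by simp

lemma sc_minus_left: "sc (- a) x = - sc a x"
  using sc_add_left[of a "- a" x] by (simp add: eq_neg_iff_add_eq_0 add.commute)

lemma sc_sum_right: "sc a (sum f A) = (\<Sum>i\<in>A. sc a (f i))"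
  by (induction A rule: infinite_finite_induct) (simp_all add: sc_add_right)

lemma T_sum: "T (sum f A) = (\<Sum>i\<in>A. T (f i))"
  using T_add[of 0 0]
  by (induction A rule: infinite_finite_induct) (simp_all add: T_add)

definition act :: "'k diffop \<Rightarrow> 'm \<Rightarrow> 'm" where
  "act P x = (\<Sum>i\<le>degree P. sc (coeff P i) ((T ^^ i) x))"

lemma act_bound:
  assumes "degree P \<le> N"
  shows "act P x = (\<Sum>i\<le>N. sc (coeff P i) ((T ^^ i) x))"
  unfolding act_def using assms by (intro sum.mono_neutral_left) (auto simp: coeff_eq_0)

lemma act_add: "act (P + Q) x = act P x + act Q x"
proof -
  have "degree (P + Q) \<le> max (degree P) (degree Q)" by (rule degree_add_le) auto
  then show ?thesis by (simp add: act_bound[of _ "max (degree P) (degree Q)"] sc_add_left sum.distrib)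
qed

lemma act_zero [simp]: "act 0 x = 0"
  by (simp add: act_def)

lemma act_zero_right [simp]: "act P 0 = 0"
proof -
  have "(T ^^ i) 0 = 0" for i by (induction i) simp_all
  then show ?thesis by (simp add: act_def)
qed

lemma act_smult: "act (smult a P) x = sc a (act P x)"
  using act_bound[of "smult a P" "degree P"] by (simp add: act_def sc_mult sc_sum_right)

lemma act_diff: "act (P - Q) x = act P x - act Q x"
  using act_add[of P "- Q" x] act_smult[of "- 1" Q x] by (simp add: sc_minus_left sc_one)

lemma act_sum: "act (sum f A) x = (\<Sum>i\<in>A. act (f i) x)"
  by (induction A rule: infinite_finite_induct) (simp_all add: act_add)

lemma act_monom: "act (monom a k) x = sc a ((T ^^ k) x)"
proof -
  have "act (monom a k) x = (\<Sum>i\<le>k. sc (coeff (monom a k) i) ((T ^^ i) x))"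
    by (rule act_bound) (simp add: degree_monom_le)
  also have "\<dots> = (\<Sum>i\<le>k. if i = k then sc a ((T ^^ i) x) else 0)"
    by (rule sum.cong) auto
  finally show ?thesis by simp
qed

lemma act_const: "act [:a:] x = sc a x"
  using act_monom[of a 0 x] by (simp add: monom_0)

lemma act_pCons_zero: "act (pCons 0 P) x = act P (T x)"
proof -
  have "act (pCons 0 P) x = (\<Sum>i\<le>Suc (degree P). sc (coeff (pCons 0 P) i) ((T ^^ i) x))"
    by (rule act_bound) (simp add: degree_pCons_le)
  also have "\<dots> = act P (T x)"
    by (subst sum.atMost_Suc_shift) (simp add: act_def funpow_swap1)
  finally show ?thesis .
qed

lemma act_theta_op: "act (theta_op P) x = T (act P x)"
proof -
  have "act (theta_op P) x
      = (\<Sum>j\<le>degree P. sc (theta (coeff P j)) ((T ^^ j) x) + sc (coeff P j) ((T ^^ Suc j) x))"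
    unfolding theta_op_def act_add act_sum act_pCons_zero act_monom
    by (simp add: act_def funpow_swap1 sum.distrib)
  also have "\<dots> = T (act P x)"
    by (simp add: act_def T_sum T_sc)
  finally show ?thesis .
qed

lemma act_theta_op_power: "act ((theta_op ^^ i) P) x = (T ^^ i) (act P x)"
  by (induction i) (simp_all add: act_theta_op)

lemma act_op_mult: "act (op_mult P Q) x = act P (act Q x)"
  unfolding op_mult_def by (simp add: act_sum act_smult act_theta_op_power) (simp add: act_def)

end

interpretation Op: diff_module smult theta_op
  by unfold_locales (simp_all add: smult_add_left smult_add_right theta_op_add theta_op_smult)

lemma op_mult_eq_act: "op_mult P Q = Op.act P Q"
  by (simp add: op_mult_def Op.act_def)

lemma op_mult_assoc: "op_mult (op_mult P Q) R = op_mult P (op_mult Q R)"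
  using Op.act_op_mult[of P Q R] by (simp only: op_mult_eq_act)

lemma theta_op_op_mult: "theta_op (op_mult P Q) = op_mult (theta_op P) Q"
  by (simp add: op_mult_eq_act Op.act_theta_op)

lemma op_mult_const: "op_mult [:a:] Q = smult a Q"
  by (simp add: op_mult_eq_act Op.act_const)

lemma op_mult_monom: "op_mult (monom a k) Q = smult a ((theta_op ^^ k) Q)"
  by (simp add: op_mult_eq_act Op.act_monom)

lemma op_mult_add_left: "op_mult (P + P') Q = op_mult P Q + op_mult P' Q"
  by (simp add: op_mult_eq_act Op.act_add)

lemma op_mult_diff_left: "op_mult (P - P') Q = op_mult P Q - op_mult P' Q"
  by (simp add: op_mult_eq_act Op.act_diff)

lemma op_mult_smult_left: "op_mult (smult a P) Q = smult a (op_mult P Q)"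
  by (simp add: op_mult_eq_act Op.act_smult)

lemma op_mult_sum_left: "op_mult (sum f A) Q = (\<Sum>i\<in>A. op_mult (f i) Q)"
  by (simp add: op_mult_eq_act Op.act_sum)

lemma op_mult_zero_left [simp]: "op_mult 0 Q = 0"
  by (simp add: op_mult_def)

lemma theta_op_power_one: "(theta_op ^^ i) 1 = monom 1 i"
  by (induction i) (simp_all add: one_pCons monom_0 theta_op_monom_one)

lemma op_mult_one_right: "op_mult P 1 = P"
proof -
  have "op_mult P 1 = (\<Sum>i\<le>degree P. monom (coeff P i) i)"
    by (simp add: op_mult_def theta_op_power_one smult_monom)
  then show ?thesis by (simp add: poly_as_sum_of_monoms)
qed

context diff_module
begin

lemma equivariant_eq_act:
  assumes h_add: "\<And>P Q. h (P + Q) = h P + h Q"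
    and h_smult: "\<And>a P. h (smult a P) = sc a (h P)"
    and h_theta: "\<And>P. h (theta_op P) = T (h P)"
  shows "h P = act P (h 1)"
proof -
  have h_sum: "h (sum f A) = (\<Sum>i\<in>A. h (f i))" for f :: "nat \<Rightarrow> _" and A
    using h_add[of 0 0]
    by (induction A rule: infinite_finite_induct) (simp_all add: h_add)
  have h_power: "h ((theta_op ^^ i) Q) = (T ^^ i) (h Q)" for i Q
    by (induction i) (simp_all add: h_theta)
  have "h P = h (op_mult P 1)" by (simp add: op_mult_one_right)
  also have "\<dots> = act P (h 1)"
    unfolding op_mult_def by (simp add: h_sum h_smult h_power act_def)
  finally show ?thesis .
qed

end

definition dual_scale ::
  "'k::field_char_0 poly fract \<Rightarrow> ('k diffop \<Rightarrow> 'k poly fract) \<Rightarrow> 'k diffop \<Rightarrow> 'k poly fract"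
  where "dual_scale a \<phi> = (\<lambda>Q. a * \<phi> Q)"

definition dual_theta ::
  "('k::field_char_0 diffop \<Rightarrow> 'k poly fract) \<Rightarrow> 'k diffop \<Rightarrow> 'k poly fract"
  where "dual_theta \<phi> = (\<lambda>Q. theta (\<phi> Q) - \<phi> (theta_op Q))"

interpretation Dual: diff_module dual_scale dual_theta
  by unfold_locales
    (auto simp: dual_scale_def dual_theta_def algebra_simps theta_add theta_mult theta_diff)

lemma sum_fun_apply: "sum f A x = (\<Sum>i\<in>A. f i x)"
  by (induction A rule: infinite_finite_induct) simp_all

lemma Dual_act_apply: "Dual.act P \<phi> Q = (\<Sum>i\<le>degree P. coeff P i * (dual_theta ^^ i) \<phi> Q)"
  by (simp add: Dual.act_def sum_fun_apply dual_scale_def)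

section \<open>The module M_L\<close>

lemma coeff_theta_op_power_above: "degree Q + i < j \<Longrightarrow> coeff ((theta_op ^^ i) Q) j = 0"
  by (induction i arbitrary: j) (simp_all add: coeff_theta_op coeff_eq_0)

lemma coeff_theta_op_power_top: "coeff ((theta_op ^^ i) Q) (degree Q + i) = lead_coeff Q"
proof (induction i)
  case (Suc i)
  have "coeff ((theta_op ^^ i) Q) (degree Q + Suc i) = 0" by (rule coeff_theta_op_power_above) simp
  with Suc show ?case by (simp add: coeff_theta_op)
qed simp

lemma coeff_theta_op_power_const_below_top:
  "coeff ((theta_op ^^ Suc i) [:b:]) i = of_nat (Suc i) * theta b"
proof (induction i)
  case (Suc i)
  have "coeff ((theta_op ^^ Suc (Suc i)) [:b:]) (Suc i)
      = theta (coeff ((theta_op ^^ Suc i) [:b:]) (Suc i)) + coeff ((theta_op ^^ Suc i) [:b:]) i"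
    by (simp add: coeff_theta_op)
  also have "\<dots> = theta b + of_nat (Suc i) * theta b"
    using Suc coeff_theta_op_power_top[of "Suc i" "[:b:]"] by simp
  finally show ?case by (simp add: algebra_simps)
qed (simp add: coeff_theta_op)

lemma coeff_theta_op_power_const_top: "coeff ((theta_op ^^ i) [:b:]) i = b"
  using coeff_theta_op_power_top[of i "[:b:]"] by simp

lemma coeff_theta_op_power_const_above: "i < j \<Longrightarrow> coeff ((theta_op ^^ i) [:b:]) j = 0"
  using coeff_theta_op_power_above[of "[:b:]" i j] by simp

locale monic_operator =
  fixes L :: "'k::field_char_0 diffop" and n :: nat
  assumes order_pos: "n \<ge> 1" and degree_L: "degree L = n" and monic_L: "coeff L n = 1"
begin

lemma degree_op_mult_L:
  assumes "S \<noteq> 0"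
  shows "degree (op_mult S L) = degree S + n"
proof (rule antisym)
  show "degree (op_mult S L) \<le> degree S + n"
    by (rule degree_le) (simp add: op_mult_def coeff_sum coeff_theta_op_power_above degree_L)
  have "coeff (op_mult S L) (degree S + n) = (\<Sum>i\<le>degree S. if i = degree S then lead_coeff S else 0)"
    unfolding op_mult_def coeff_sum coeff_smult
  proof (rule sum.cong)
    fix i assume "i \<in> {..degree S}"
    then show "coeff S i * coeff ((theta_op ^^ i) L) (degree S + n)
        = (if i = degree S then lead_coeff S else 0)"
      using coeff_theta_op_power_top[of i L] coeff_theta_op_power_above[of L i "degree S + n"]
      by (auto simp: degree_L monic_L add.commute)
  qed simp
  with assms show "degree S + n \<le> degree (op_mult S L)" by (simp add: le_degree)
qed

lemma left_ideal_degree: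
  assumes "in_left_ideal L P" and "P \<noteq> 0"
  shows "n \<le> degree P"
proof -
  obtain S where "P = op_mult S L" using assms(1) unfolding in_left_ideal_def ..
  moreover from this assms(2) have "S \<noteq> 0" by auto
  ultimately show ?thesis by (simp add: degree_op_mult_L)
qed

lemma division_exists: "\<exists>S r. Q = op_mult S L + r \<and> degree r < n"
proof (induction "degree Q" arbitrary: Q rule: less_induct)
  case less
  show ?case
  proof (cases "degree Q < n")
    case True
    then show ?thesis by (intro exI[of _ 0] exI[of _ Q]) simp
  next
    case False
    define d where "d = degree Q"
    define Q' where "Q' = Q - smult (lead_coeff Q) ((theta_op ^^ (d - n)) L)"
    have "n \<le> d" using False d_def by simp
    have high: "coeff Q' j = 0" if "d \<le> j" for j
      using that coeff_theta_op_power_top[of "d - n" L] \<open>n \<le> d\<close>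
        coeff_theta_op_power_above[of L "d - n" j]
      by (cases "j = d") (simp_all add: Q'_def d_def coeff_eq_0 degree_L monic_L)
    have "degree Q' < d"
    proof (rule ccontr)
      assume "\<not> degree Q' < d"
      with high have "Q' = 0" by (metis leading_coeff_0_iff not_le)
      with \<open>\<not> degree Q' < d\<close> \<open>n \<le> d\<close> order_pos show False by simp
    qed
    then obtain S r where Sr: "Q' = op_mult S L + r" "degree r < n"
      using less d_def by blast
    then have "Q = op_mult (S + monom (lead_coeff Q) (d - n)) L + r"
      by (simp add: Q'_def op_mult_add_left op_mult_monom algebra_simps)
    with Sr show ?thesis by blast
  qed
qed

lemma mcong_refl: "mcong L P P"
  unfolding mcong_def in_left_ideal_def by (intro exI[of _ 0]) simp

lemma mcong_sym: "mcong L P Q \<Longrightarrow> mcong L Q P"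
  unfolding mcong_def in_left_ideal_def
proof (elim exE)
  fix S assume "P - Q = op_mult S L"
  moreover have "op_mult (- S) L = - op_mult S L" using op_mult_diff_left[of 0 S L] by simp
  ultimately have "Q - P = op_mult (- S) L" by (metis minus_diff_eq)
  then show "\<exists>S. Q - P = op_mult S L" ..
qed

lemma mcong_trans: "mcong L P Q \<Longrightarrow> mcong L Q R \<Longrightarrow> mcong L P R"
  unfolding mcong_def in_left_ideal_def
proof (elim exE)
  fix S S' assume "P - Q = op_mult S L" "Q - R = op_mult S' L"
  then have "P - R = op_mult (S + S') L" by (simp add: op_mult_add_left algebra_simps)
  then show "\<exists>S. P - R = op_mult S L" ..
qed

lemma mcong_add: "mcong L P P' \<Longrightarrow> mcong L Q Q' \<Longrightarrow> mcong L (P + Q) (P' + Q')"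
  unfolding mcong_def in_left_ideal_def
proof (elim exE)
  fix S S' assume "P - P' = op_mult S L" "Q - Q' = op_mult S' L"
  then have "P + Q - (P' + Q') = op_mult (S + S') L" by (simp add: op_mult_add_left algebra_simps)
  then show "\<exists>S. P + Q - (P' + Q') = op_mult S L" ..
qed

lemma mcong_smult: "mcong L P P' \<Longrightarrow> mcong L (smult a P) (smult a P')"
  unfolding mcong_def in_left_ideal_def
proof (elim exE)
  fix S assume "P - P' = op_mult S L"
  then have "smult a P - smult a P' = op_mult (smult a S) L"
    by (simp add: op_mult_smult_left smult_diff_right[symmetric])
  then show "\<exists>S. smult a P - smult a P' = op_mult S L" ..
qed

lemma mcong_op_mult_L: "mcong L (op_mult S L) 0"
  unfolding mcong_def in_left_ideal_def by auto

lemma mcong_low_degree_eq: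
  assumes "degree r < n" "degree r' < n" "mcong L r r'"
  shows "r = r'"
proof (rule ccontr)
  assume "r \<noteq> r'"
  then have "n \<le> degree (r - r')" using left_ideal_degree assms(3) unfolding mcong_def by simp
  moreover have "degree (r - r') < n" using assms(1,2) degree_diff_le_max[of r r'] by linarith
  ultimately show False by simp
qed

text \<open>The coefficients of reduce Q are the coordinates of the class of Q in the basis
  theta^j eta, j < n, of M_L.\<close>

definition reduce :: "'k diffop \<Rightarrow> 'k diffop" where
  "reduce Q = (SOME r. degree r < n \<and> mcong L Q r)"

lemma reduce_spec: "degree (reduce Q) < n \<and> mcong L Q (reduce Q)"
proof -
  obtain S r where "Q = op_mult S L + r" "degree r < n" using division_exists by blast
  then have "degree r < n \<and> mcong L Q r" unfolding mcong_def in_left_ideal_def by auto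
  then show ?thesis unfolding reduce_def by (rule someI)
qed

lemma degree_reduce: "degree (reduce Q) < n"
  using reduce_spec by blast

lemma mcong_reduce: "mcong L Q (reduce Q)"
  using reduce_spec by blast

lemma reduce_eqI: "degree r < n \<Longrightarrow> mcong L Q r \<Longrightarrow> reduce Q = r"
  by (metis mcong_low_degree_eq degree_reduce mcong_reduce mcong_sym mcong_trans)

lemma reduce_low_degree: "degree r < n \<Longrightarrow> reduce r = r"
  by (rule reduce_eqI) (simp_all add: mcong_refl)

lemma reduce_cong: "mcong L Q Q' \<Longrightarrow> reduce Q = reduce Q'"
  by (metis mcong_sym mcong_trans degree_reduce reduce_eqI mcong_reduce)

lemma reduce_add: "reduce (P + Q) = reduce P + reduce Q"
  by (rule reduce_eqI) (auto intro: mcong_add mcong_reduce degree_add_less degree_reduce)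

lemma reduce_smult: "reduce (smult a P) = smult a (reduce P)"
  using order_pos by (intro reduce_eqI)
    (auto intro: mcong_smult mcong_reduce le_less_trans[OF degree_smult_le] degree_reduce)

lemma reduce_op_mult_L: "reduce (op_mult S L) = 0"
  using reduce_cong[OF mcong_op_mult_L] reduce_low_degree[of 0] order_pos by simp

lemma reduce_theta_op:
  assumes "degree r < n"
  shows "reduce (theta_op r) = theta_op r - smult (coeff r (n - 1)) L"
proof (rule reduce_eqI)
  have "coeff (theta_op r - smult (coeff r (n - 1)) L) j = 0" if "n - 1 < j" for j
    using that assms order_pos
    by (cases "j = n") (simp_all add: coeff_theta_op coeff_eq_0 monic_L degree_L)
  then have "degree (theta_op r - smult (coeff r (n - 1)) L) \<le> n - 1" by (intro degree_le) auto
  then show "degree (theta_op r - smult (coeff r (n - 1)) L) < n" using order_pos by simp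
  show "mcong L (theta_op r) (theta_op r - smult (coeff r (n - 1)) L)"
    unfolding mcong_def in_left_ideal_def
    by (intro exI[of _ "[:coeff r (n - 1):]"]) (simp add: op_mult_const)
qed

definition coord :: "nat \<Rightarrow> 'k diffop \<Rightarrow> 'k poly fract" where
  "coord k Q = coeff (reduce Q) k"

text \<open>K(t)-linear functionals on M_L, seen as functions on representatives.\<close>

definition M_functional :: "('k diffop \<Rightarrow> 'k poly fract) \<Rightarrow> bool" where
  "M_functional \<phi> \<longleftrightarrow> (\<forall>x y. \<phi> (x + y) = \<phi> x + \<phi> y) \<and> (\<forall>a x. \<phi> (smult a x) = a * \<phi> x)
     \<and> (\<forall>S. \<phi> (op_mult S L) = 0)"

lemma M_functional_zero:
  assumes "M_functional \<phi>"
  shows "\<phi> 0 = 0"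
proof -
  have "\<phi> (op_mult 0 L) = 0" using assms unfolding M_functional_def by blast
  then show ?thesis by simp
qed

lemma M_functional_diff:
  assumes "M_functional \<phi>"
  shows "\<phi> (x - y) = \<phi> x - \<phi> y"
proof -
  have "\<phi> ((x - y) + y) = \<phi> (x - y) + \<phi> y" using assms unfolding M_functional_def by blast
  then show ?thesis by simp
qed

lemma M_functional_cong: "M_functional \<phi> \<Longrightarrow> mcong L x y \<Longrightarrow> \<phi> x = \<phi> y"
  unfolding mcong_def in_left_ideal_def using M_functional_diff[of \<phi> x y]
  by (auto simp: M_functional_def)

lemma M_functional_reduce: "M_functional \<phi> \<Longrightarrow> \<phi> x = \<phi> (reduce x)"
  using M_functional_cong mcong_reduce by blast

lemma M_functional_sum: "M_functional \<phi> \<Longrightarrow> \<phi> (sum f A) = (\<Sum>i\<in>A. \<phi> (f i))"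
  by (induction A rule: infinite_finite_induct) (simp_all add: M_functional_zero M_functional_def)

lemma M_functional_coord: "M_functional (coord k)"
  unfolding M_functional_def coord_def by (simp add: reduce_add reduce_smult reduce_op_mult_L)

lemma M_functional_dual_scale: "M_functional \<phi> \<Longrightarrow> M_functional (dual_scale a \<phi>)"
  unfolding M_functional_def dual_scale_def by (simp add: algebra_simps)

lemma M_functional_dual_theta: "M_functional \<phi> \<Longrightarrow> M_functional (dual_theta \<phi>)"
  unfolding M_functional_def dual_theta_def
  by (simp add: theta_add theta_mult theta_op_add theta_op_smult theta_op_op_mult algebra_simps)

lemma M_functional_dual_theta_power: "M_functional \<phi> \<Longrightarrow> M_functional ((dual_theta ^^ i) \<phi>)"
  by (induction i) (simp_all add: M_functional_dual_theta)

lemma M_functional_Dual_act: "M_functional \<phi> \<Longrightarrow> M_functional (Dual.act P \<phi>)"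
  using M_functional_dual_theta_power[of \<phi>]
  unfolding M_functional_def Dual_act_apply
  by (simp add: sum.distrib sum_distrib_left algebra_simps)

lemma M_functional_expand:
  assumes "M_functional \<phi>" and "degree r < n"
  shows "\<phi> r = (\<Sum>j<n. coeff r j * \<phi> (monom 1 j))"
proof -
  have "{..<n} = {..n - 1}" using order_pos by auto
  then have "r = (\<Sum>j<n. smult (coeff r j) (monom 1 j))"
    using assms(2) poly_as_sum_of_monoms'[of r "n - 1"] by (simp add: smult_monom)
  then have "\<phi> r = \<phi> (\<Sum>j<n. smult (coeff r j) (monom 1 j))" by simp
  also have "\<dots> = (\<Sum>j<n. coeff r j * \<phi> (monom 1 j))"
    using assms(1) by (simp add: M_functional_sum) (simp add: M_functional_def)
  finally show ?thesis .
qed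

lemma dual_theta_coord:
  assumes "k < n"
  shows "dual_theta (coord k)
    = dual_scale (coeff L k) (coord (n - 1)) - (if k = 0 then 0 else coord (k - 1))"
proof
  fix Q
  define r where "r = reduce Q"
  have r: "degree r < n" unfolding r_def by (rule degree_reduce)
  have "dual_theta (coord k) Q = dual_theta (coord k) r"
    unfolding r_def by (intro M_functional_reduce M_functional_dual_theta M_functional_coord)
  also have "\<dots> = theta (coeff r k) - coeff (reduce (theta_op r)) k"
    using r by (simp add: dual_theta_def coord_def reduce_low_degree)
  also have "\<dots> = coeff L k * coeff r (n - 1) - (if k = 0 then 0 else coeff r (k - 1))"
    using r by (simp add: reduce_theta_op coeff_theta_op)
  finally show "dual_theta (coord k) Q
      = (dual_scale (coeff L k) (coord (n - 1)) - (if k = 0 then 0 else coord (k - 1))) Q"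
    by (simp add: dual_scale_def coord_def r_def)
qed

text \<open>Applied to the last coordinate functional, the partial adjoints produce the coordinate
  functionals one at a time; the full adjoint gives 0.\<close>

definition partial_adjoint :: "nat \<Rightarrow> 'k diffop" where
  "partial_adjoint m = (\<Sum>i\<le>m. smult ((-1) ^ i) ((theta_op ^^ i) [:coeff L (n - m + i):]))"

lemma adjoint_eq_partial_adjoint: "adjoint L = partial_adjoint n"
  unfolding adjoint_def partial_adjoint_def by (simp add: degree_L op_mult_monom)

lemma partial_adjoint_Suc:
  assumes "m < n"
  shows "partial_adjoint (Suc m) = [:coeff L (n - Suc m):] - theta_op (partial_adjoint m)"
proof -
  have idx: "Suc (n - Suc m + i) = n - m + i" for i using assms by simp
  have "theta_op (partial_adjoint m)
      = (\<Sum>i\<le>m. smult ((-1) ^ i) ((theta_op ^^ Suc i) [:coeff L (n - m + i):]))"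
    unfolding partial_adjoint_def by (simp add: Op.T_sum theta_op_smult)
  then show ?thesis
    unfolding partial_adjoint_def[of "Suc m"]
    by (subst sum.atMost_Suc_shift) (simp add: idx sum_negf del: funpow.simps)
qed

lemma Dual_act_partial_adjoint:
  "m < n \<Longrightarrow> Dual.act (partial_adjoint m) (coord (n - 1)) = coord (n - 1 - m)"
proof (induction m)
  case 0
  then show ?case by (simp add: partial_adjoint_def monic_L Dual.act_const Dual.sc_one)
next
  case (Suc m)
  then show ?case
    by (simp add: partial_adjoint_Suc Dual.act_diff Dual.act_const Dual.act_theta_op
        dual_theta_coord Suc_diff_Suc)
qed

lemma Dual_act_adjoint_last_coord: "Dual.act (adjoint L) (coord (n - 1)) = 0"
proof -
  obtain m where m: "n = Suc m" using order_pos by (cases n) auto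
  then have "adjoint L = [:coeff L 0:] - theta_op (partial_adjoint m)"
    using adjoint_eq_partial_adjoint partial_adjoint_Suc[of m] by simp
  moreover have "Dual.act (partial_adjoint m) (coord (n - 1)) = coord 0"
    using m Dual_act_partial_adjoint[of m] by simp
  ultimately show ?thesis
    using order_pos by (simp add: Dual.act_diff Dual.act_const Dual.act_theta_op dual_theta_coord)
qed

lemma adjoint_mult_const:
  "op_mult (adjoint L) [:b:] = (\<Sum>i\<le>n. smult ((-1) ^ i) ((theta_op ^^ i) [:coeff L i * b:]))"
proof -
  have "op_mult (op_mult (monom 1 i) [:coeff L i:]) [:b:] = (theta_op ^^ i) [:coeff L i * b:]" for i
    by (simp only: op_mult_assoc op_mult_const smult_pCons smult_0_right) (simp add: op_mult_monom)
  then show ?thesis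
    unfolding adjoint_def by (simp add: degree_L op_mult_sum_left op_mult_smult_left)
qed

lemma coeff_adjoint_mult_const_above: "n < j \<Longrightarrow> coeff (op_mult (adjoint L) [:b:]) j = 0"
  by (simp add: adjoint_mult_const coeff_sum coeff_theta_op_power_const_above)

lemma coeff_adjoint_mult_const_top: "coeff (op_mult (adjoint L) [:b:]) n = (-1) ^ n * b"
proof -
  have "coeff (op_mult (adjoint L) [:b:]) n = (\<Sum>i\<le>n. if i = n then (-1) ^ n * b else 0)"
    unfolding adjoint_mult_const coeff_sum coeff_smult
    by (intro sum.cong)
      (auto simp: coeff_theta_op_power_const_top coeff_theta_op_power_const_above monic_L)
  then show ?thesis by simp
qed

lemma coeff_adjoint_mult_const_below_top:
  assumes m: "n = Suc m"
  shows "coeff (op_mult (adjoint L) [:b:]) m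
    = (-1) ^ n * (of_nat n * theta b) + (-1) ^ m * (coeff L m * b)"
proof -
  have "coeff (op_mult (adjoint L) [:b:]) m
      = (\<Sum>i<Suc (Suc m). (-1) ^ i * coeff ((theta_op ^^ i) [:coeff L i * b:]) m)"
    unfolding adjoint_mult_const coeff_sum coeff_smult m by (simp add: lessThan_Suc_atMost)
  also have "\<dots> = (\<Sum>i<m. (-1) ^ i * coeff ((theta_op ^^ i) [:coeff L i * b:]) m)
      + (-1) ^ m * (coeff L m * b) + (-1) ^ Suc m * (of_nat (Suc m) * theta b)"
    using monic_L m
    by (simp add: coeff_theta_op_power_const_top coeff_theta_op_power_const_below_top
        del: funpow.simps)
  also have "(\<Sum>i<m. (-1) ^ i * coeff ((theta_op ^^ i) [:coeff L i * b:]) m) = 0"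
    by (rule sum.neutral) (simp add: coeff_theta_op_power_const_above)
  finally show ?thesis using m by simp
qed

lemma self_adjoint_if_adjoint_mult_in_left_ideal:
  assumes \<beta>: "\<beta> \<noteq> 0" and ideal: "in_left_ideal L (op_mult (adjoint L) [:\<beta>:])"
  shows "beta_factor L \<beta> \<and> self_adjoint_wrt L \<beta>"
proof -
  define H where "H = op_mult (adjoint L) [:\<beta>:]"
  obtain S where S: "H = op_mult S L" using ideal unfolding H_def in_left_ideal_def ..
  have H_top: "coeff H n = (-1) ^ n * \<beta>" by (simp add: H_def coeff_adjoint_mult_const_top)
  with \<beta> S have "S \<noteq> 0" by auto
  moreover have "degree H \<le> n" by (rule degree_le) (simp add: H_def coeff_adjoint_mult_const_above)
  ultimately have "degree S = 0" using degree_op_mult_L S by simp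
  then obtain s where "S = [:s:]" by (metis degree_eq_zeroE)
  then have H_eq: "H = smult s L" using S by (simp add: op_mult_const)
  then have s: "s = (-1) ^ n * \<beta>" using H_top monic_L by simp
  obtain m where m: "n = Suc m" using order_pos by (cases n) auto
  have "(-1) ^ n * \<beta> * coeff L m = (-1) ^ n * (of_nat n * theta \<beta>) - (-1) ^ n * (coeff L m * \<beta>)"
    using coeff_adjoint_mult_const_below_top[OF m, of \<beta>] H_eq s m by (simp add: H_def)
  then have "(-1) ^ n * (of_nat n * theta \<beta> - 2 * coeff L m * \<beta>) = 0"
    by (simp add: algebra_simps)
  then have "beta_factor L \<beta>" unfolding beta_factor_def using \<beta> m degree_L by simp
  moreover have "adjoint L = smult ((-1) ^ n) (op_mult [:\<beta>:] (op_mult L [:inverse \<beta>:]))"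
  proof -
    have "adjoint L = op_mult (adjoint L) (op_mult [:\<beta>:] [:inverse \<beta>:])"
      using \<beta> op_mult_one_right[of "adjoint L"] by (simp add: op_mult_const one_pCons)
    also have "\<dots> = smult s (op_mult L [:inverse \<beta>:])"
      by (simp add: op_mult_assoc[symmetric] H_def[symmetric] H_eq op_mult_smult_left)
    finally show ?thesis by (simp add: op_mult_const s)
  qed
  ultimately show ?thesis unfolding self_adjoint_wrt_def degree_L by blast
qed

lemma Dual_act_L_if_self_adjoint:
  assumes "self_adjoint_wrt L \<beta>" and "\<beta> \<noteq> 0"
  shows "Dual.act L (dual_scale (inverse \<beta>) (coord (n - 1))) = 0"
proof -
  define e where "e = (-1) ^ n * \<beta>"
  have "e \<noteq> 0" using assms(2) by (simp add: e_def)
  have "adjoint L = smult e (op_mult L [:inverse \<beta>:])"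
    using assms(1) unfolding self_adjoint_wrt_def by (simp add: op_mult_const degree_L e_def)
  then have "op_mult L [:inverse \<beta>:] = smult (inverse e) (adjoint L)"
    using \<open>e \<noteq> 0\<close> by simp
  then have "Dual.act L (dual_scale (inverse \<beta>) (coord (n - 1)))
      = Dual.act (smult (inverse e) (adjoint L)) (coord (n - 1))"
    by (simp flip: Dual.act_const Dual.act_op_mult)
  also have "\<dots> = 0" by (simp only: Dual.act_smult Dual_act_adjoint_last_coord Dual.sc_zero_right)
  finally show ?thesis .
qed

end

section \<open>From a polarization to a beta-factor\<close>

locale polarized_operator = monic_operator L n for L :: "'k::field_char_0 diffop" and n +
  fixes B :: "'k diffop \<Rightarrow> 'k diffop \<Rightarrow> 'k poly fract"
  assumes polarization: "polarization L B"
begin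

lemma pairing_cong_left: "mcong L P P' \<Longrightarrow> B P Q = B P' Q"
  and pairing_cong_right: "mcong L Q Q' \<Longrightarrow> B P Q = B P Q'"
  and pairing_smult_add_left: "B (smult a P + P') Q = a * B P Q + B P' Q"
  and pairing_smult_add_right: "B P (smult a Q + Q') = a * B P Q + B P Q'"
  and pairing_nondegenerate: "(\<forall>Q. B P Q = 0) \<Longrightarrow> in_left_ideal L P"
  and pairing_horizontal: "theta (B P Q) = B (theta_op P) Q + B P (theta_op Q)"
  and pairing_Fil: "i < n \<Longrightarrow> in_Fil L i P \<Longrightarrow> in_Fil L (n - i) Q \<Longrightarrow> B P Q = 0"
  using polarization degree_L unfolding polarization_def by blast+

lemma pairing_zero_left: "B 0 Q = 0"
  using add_left_imp_eq[of "B 0 Q" "B 0 Q" 0] pairing_smult_add_left[of 1 0 0 Q] by simp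

lemma pairing_zero_right: "B P 0 = 0"
  using add_left_imp_eq[of "B P 0" "B P 0" 0] pairing_smult_add_right[of P 1 0 0] by simp

lemma pairing_add_left: "B (P + P') Q = B P Q + B P' Q"
  using pairing_smult_add_left[of 1 P P' Q] by simp

lemma pairing_smult_left: "B (smult a P) Q = a * B P Q"
  using pairing_smult_add_left[of a P 0 Q] by (simp add: pairing_zero_left)

lemma M_functional_pairing_right: "M_functional (B P)"
  unfolding M_functional_def
  using pairing_smult_add_right[of P 1] pairing_smult_add_right[of P _ _ 0]
    pairing_cong_right[OF mcong_op_mult_L] by (simp add: pairing_zero_right)

lemma pairing_eq_Dual_act: "B P = Dual.act P (B 1)"
proof (rule Dual.equivariant_eq_act)
  show "B (P + Q) = B P + B Q" for P Q by (rule ext) (simp add: pairing_add_left)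
  show "B (smult a P) = dual_scale a (B P)" for a P
    by (rule ext) (simp add: pairing_smult_left dual_scale_def)
  show "B (theta_op P) = dual_theta (B P)" for P
    by (rule ext) (simp add: dual_theta_def pairing_horizontal)
qed

text \<open>By the filtration condition, eta pairs to zero with theta^j eta for j < n - 1.\<close>

lemma pairing_one: "B 1 = dual_scale (B 1 (monom 1 (n - 1))) (coord (n - 1))"
proof
  fix Q
  have B_one_monom: "B 1 (monom 1 j) = 0" if "j < n - 1" for j
  proof (rule pairing_Fil)
    show "n - 1 < n" using order_pos by simp
    show "in_Fil L (n - 1) 1" unfolding in_Fil_def using order_pos degree_L
      by (intro exI[of _ 1]) (auto simp: mcong_refl coeff_1)
    show "in_Fil L (n - (n - 1)) (monom 1 j)" unfolding in_Fil_def using order_pos degree_L that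
      by (intro exI[of _ "monom 1 j"]) (auto simp: mcong_refl)
  qed
  have "B 1 Q = B 1 (reduce Q)" by (rule M_functional_reduce[OF M_functional_pairing_right])
  also have "\<dots> = (\<Sum>j<n. coeff (reduce Q) j * B 1 (monom 1 j))"
    by (rule M_functional_expand[OF M_functional_pairing_right degree_reduce])
  also have "\<dots> = (\<Sum>j<n. if j = n - 1 then coeff (reduce Q) (n - 1) * B 1 (monom 1 (n - 1)) else 0)"
    by (rule sum.cong) (auto simp: B_one_monom)
  finally show "B 1 Q = dual_scale (B 1 (monom 1 (n - 1))) (coord (n - 1)) Q"
    using order_pos by (simp add: dual_scale_def coord_def)
qed

lemma pairing_one_last_nonzero: "B 1 (monom 1 (n - 1)) \<noteq> 0"
proof
  assume "B 1 (monom 1 (n - 1)) = 0"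
  then have "in_left_ideal L 1"
    using pairing_one by (intro pairing_nondegenerate) (simp add: dual_scale_def)
  then have "n \<le> degree (1 :: 'k diffop)" by (rule left_ideal_degree) simp
  then show False using order_pos by simp
qed

text \<open>The beta-factor is the inverse of the pairing of eta with theta^(n-1) eta.\<close>

lemma self_adjoint_beta_factor: "\<exists>\<beta>. beta_factor L \<beta> \<and> self_adjoint_wrt L \<beta>"
proof -
  define c where "c = B 1 (monom 1 (n - 1))"
  have "c \<noteq> 0" unfolding c_def by (rule pairing_one_last_nonzero)
  have "op_mult [:inverse c:] [:c:] = 1"
    using \<open>c \<noteq> 0\<close> by (simp add: op_mult_const one_pCons)
  have B_one: "B 1 = dual_scale c (coord (n - 1))" unfolding c_def by (rule pairing_one)
  have "B (op_mult (adjoint L) [:inverse c:]) = Dual.act (op_mult (adjoint L) [:inverse c:]) (B 1)"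
    by (rule pairing_eq_Dual_act)
  also have "\<dots> = Dual.act (op_mult (adjoint L) (op_mult [:inverse c:] [:c:])) (coord (n - 1))"
    by (simp only: B_one Dual.act_op_mult Dual.act_const)
  also have "\<dots> = 0"
    unfolding \<open>op_mult [:inverse c:] [:c:] = 1\<close> op_mult_one_right
    by (rule Dual_act_adjoint_last_coord)
  finally have "in_left_ideal L (op_mult (adjoint L) [:inverse c:])"
    by (intro pairing_nondegenerate) simp
  with \<open>c \<noteq> 0\<close> have "beta_factor L (inverse c) \<and> self_adjoint_wrt L (inverse c)"
    by (intro self_adjoint_if_adjoint_mult_in_left_ideal) simp_all
  then show ?thesis ..
qed

end

section \<open>From a beta-factor to a polarization\<close>

locale annihilated_functional = monic_operator L n for L :: "'k::field_char_0 diffop" and n +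
  fixes c :: "'k poly fract"
  assumes c_nonzero: "c \<noteq> 0"
    and annihilated: "Dual.act L (dual_scale c (coord (n - 1))) = 0"
begin

definition pairing :: "'k diffop \<Rightarrow> 'k diffop \<Rightarrow> 'k poly fract" where
  "pairing P = Dual.act P (dual_scale c (coord (n - 1)))"

lemma M_functional_last_coord: "M_functional (dual_scale c (coord (n - 1)))"
  by (intro M_functional_dual_scale M_functional_coord)

lemma M_functional_pairing_right: "M_functional (pairing P)"
  unfolding pairing_def by (intro M_functional_Dual_act M_functional_last_coord)

lemma pairing_apply:
  "degree P \<le> N \<Longrightarrow>
    pairing P Q = (\<Sum>i\<le>N. coeff P i * (dual_theta ^^ i) (dual_scale c (coord (n - 1))) Q)"
  by (simp add: pairing_def Dual.act_bound sum_fun_apply dual_scale_def)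

lemma dual_theta_power_last_coord_monom:
  assumes "j + k \<le> n - 1"
  shows "(dual_theta ^^ j) (dual_scale c (coord (n - 1))) (monom 1 k)
    = (if j + k = n - 1 then (-1) ^ j * c else 0)"
  using assms
proof (induction j arbitrary: k)
  case 0
  then have "degree (monom (1 :: 'k poly fract) k) < n" using order_pos by (simp add: degree_monom_eq)
  then show ?case by (simp add: dual_scale_def coord_def reduce_low_degree)
next
  case (Suc j)
  then show ?case by (simp add: dual_theta_def theta_op_monom_one)
qed

lemma pairing_cong_left:
  assumes "mcong L P P'"
  shows "pairing P = pairing P'"
proof -
  obtain S where "P - P' = op_mult S L" using assms unfolding mcong_def in_left_ideal_def ..
  then have "pairing P - pairing P' = 0"
    by (simp only: pairing_def flip: Dual.act_diff) (simp only: Dual.act_op_mult annihilated Dual.act_zero_right)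
  then show ?thesis by simp
qed

lemma pairing_theta_op_left: "pairing (theta_op P) Q = theta (pairing P Q) - pairing P (theta_op Q)"
  by (simp add: pairing_def Dual.act_theta_op dual_theta_def)

lemma pairing_one_right: "pairing Q 1 = (-1) ^ (n - 1) * c * coord (n - 1) Q"
proof -
  define r where "r = reduce Q"
  have r: "degree r \<le> n - 1" unfolding r_def using degree_reduce[of Q] by simp
  have "pairing Q = pairing r" unfolding r_def by (rule pairing_cong_left[OF mcong_reduce])
  then have "pairing Q 1 = pairing r (monom 1 0)" by (simp add: one_pCons monom_0)
  also have "\<dots> = (\<Sum>i\<le>n - 1. if i = n - 1 then coeff r (n - 1) * ((-1) ^ (n - 1) * c) else 0)"
    unfolding pairing_apply[OF r]
  proof (rule sum.cong)
    fix i assume "i \<in> {..n - 1}"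
    then show "coeff r i * (dual_theta ^^ i) (dual_scale c (coord (n - 1))) (monom 1 0)
        = (if i = n - 1 then coeff r (n - 1) * ((-1) ^ (n - 1) * c) else 0)"
      using dual_theta_power_last_coord_monom[of i 0] by simp
  qed simp
  finally show ?thesis by (simp add: coord_def r_def)
qed

lemma pairing_sym: "pairing Q P = (-1) ^ (n + 1) * pairing P Q"
proof -
  define s :: "'k poly fract" where "s = (-1) ^ (n + 1)"
  have s_sq: "s * s = 1" by (simp add: s_def flip: power_add)
  have "(\<lambda>Q. s * pairing Q P) = Dual.act P ((\<lambda>P Q. s * pairing Q P) 1)"
  proof (rule Dual.equivariant_eq_act)
    show "(\<lambda>Q. s * pairing Q (P + P')) = (\<lambda>Q. s * pairing Q P) + (\<lambda>Q. s * pairing Q P')" for P P'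
      using M_functional_pairing_right by (auto simp: M_functional_def algebra_simps)
    show "(\<lambda>Q. s * pairing Q (smult a P)) = dual_scale a (\<lambda>Q. s * pairing Q P)" for a P
      using M_functional_pairing_right by (auto simp: M_functional_def dual_scale_def)
    have theta_s: "theta (s * x) = s * theta x" for x by (simp add: theta_mult theta_minus s_def)
    show "(\<lambda>Q. s * pairing Q (theta_op P)) = dual_theta (\<lambda>Q. s * pairing Q P)" for P
    proof
      fix Q
      have "pairing Q (theta_op P) = theta (pairing Q P) - pairing (theta_op Q) P"
        using pairing_theta_op_left[of Q P] by simp
      then show "s * pairing Q (theta_op P) = dual_theta (\<lambda>Q. s * pairing Q P) Q"
        by (simp add: dual_theta_def theta_s right_diff_distrib)
    qed
  qed
  also have "(\<lambda>P Q. s * pairing Q P) 1 = dual_scale c (coord (n - 1))"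
  proof
    fix Q
    have "s * (-1) ^ (n - 1) = (1 :: 'k poly fract)"
      using order_pos by (simp add: s_def flip: power_add)
    then show "(\<lambda>P Q. s * pairing Q P) 1 Q = dual_scale c (coord (n - 1)) Q"
      by (simp add: pairing_one_right dual_scale_def mult.assoc[symmetric])
  qed
  finally have "s * pairing Q P = pairing P Q" by (simp add: pairing_def fun_eq_iff)
  then have "s * (s * pairing Q P) = s * pairing P Q" by simp
  then show ?thesis using s_sq by (simp add: s_def mult.assoc[symmetric])
qed

lemma pairing_nondegenerate:
  assumes zero: "\<forall>Q. pairing P Q = 0"
  shows "in_left_ideal L P"
proof (cases "reduce P = 0")
  case True
  then show ?thesis using mcong_reduce[of P] by (simp add: mcong_def)
next
  case False
  define r where "r = reduce P"
  define d where "d = degree r"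
  have "d < n" unfolding d_def r_def by (rule degree_reduce)
  have "pairing r = pairing P" unfolding r_def by (rule pairing_cong_left[OF mcong_sym[OF mcong_reduce]])
  then have "0 = pairing r (monom 1 (n - 1 - d))" using zero by simp
  also have "\<dots> = (\<Sum>i\<le>d. if i = d then coeff r d * ((-1) ^ d * c) else 0)"
    unfolding pairing_apply[OF order_refl, of r, folded d_def]
  proof (rule sum.cong)
    fix j assume "j \<in> {..d}"
    then show "coeff r j * (dual_theta ^^ j) (dual_scale c (coord (n - 1))) (monom 1 (n - 1 - d))
        = (if j = d then coeff r d * ((-1) ^ d * c) else 0)"
      using dual_theta_power_last_coord_monom[of j "n - 1 - d"] \<open>d < n\<close> by auto
  qed simp
  finally have "coeff r d * ((-1) ^ d * c) = 0" by simp
  moreover have "coeff r d \<noteq> 0" using False by (simp add: d_def r_def)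
  ultimately show ?thesis using c_nonzero by simp
qed

lemma pairing_Fil:
  assumes "i < n" and "in_Fil L i P" and "in_Fil L (n - i) Q"
  shows "pairing P Q = 0"
proof -
  obtain P' where P': "mcong L P P'" "\<forall>j. n - i \<le> j \<longrightarrow> coeff P' j = 0"
    using assms(2) degree_L unfolding in_Fil_def by auto
  obtain Q' where Q': "mcong L Q Q'" "\<forall>k. i \<le> k \<longrightarrow> coeff Q' k = 0"
    using assms(1,3) degree_L unfolding in_Fil_def by auto
  have "degree Q' < n"
  proof (cases "Q' = 0")
    case False
    then have "degree Q' < i" using Q'(2) by (meson leading_coeff_0_iff not_le)
    with assms(1) show ?thesis by simp
  qed (use order_pos in simp)
  have "pairing P Q = pairing P' Q'"
    using pairing_cong_left[OF P'(1)] M_functional_cong[OF M_functional_pairing_right Q'(1)] by simp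
  also have "\<dots> = (\<Sum>j\<le>degree P'. coeff P' j
      * (\<Sum>k<n. coeff Q' k * (dual_theta ^^ j) (dual_scale c (coord (n - 1))) (monom 1 k)))"
    unfolding pairing_apply[OF order_refl]
    using M_functional_expand[OF M_functional_dual_theta_power[OF M_functional_last_coord]
        \<open>degree Q' < n\<close>] by simp
  also have "\<dots> = 0"
  proof (intro sum.neutral ballI)
    fix j
    show "coeff P' j
        * (\<Sum>k<n. coeff Q' k * (dual_theta ^^ j) (dual_scale c (coord (n - 1))) (monom 1 k)) = 0"
    proof (cases "j < n - i")
      case True
      have "coeff Q' k * (dual_theta ^^ j) (dual_scale c (coord (n - 1))) (monom 1 k) = 0" for k
        using Q'(2) dual_theta_power_last_coord_monom[of j k] True by (cases "k < i") auto
      then have "(\<Sum>k<n. coeff Q' k * (dual_theta ^^ j) (dual_scale c (coord (n - 1))) (monom 1 k)) = 0"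
        by (intro sum.neutral) blast
      then show ?thesis by simp
    qed (simp add: P'(2))
  qed
  finally show ?thesis .
qed

lemma polarization_pairing: "polarization L pairing"
  unfolding polarization_def degree_L
proof (intro conjI allI impI)
  fix P P' Q a i
  show "pairing P Q = pairing P' Q" if "mcong L P P'" using pairing_cong_left[OF that] by simp
  show "pairing Q P = pairing Q P'" if "mcong L P P'"
    using M_functional_cong[OF M_functional_pairing_right that] .
  show "pairing (smult a P + P') Q = a * pairing P Q + pairing P' Q"
    by (simp add: pairing_def Dual.act_add Dual.act_smult dual_scale_def)
  show "pairing Q (smult a P + P') = a * pairing Q P + pairing Q P'"
    using M_functional_pairing_right[of Q] by (simp add: M_functional_def)
  show "pairing Q P = (-1) ^ (n + 1) * pairing P Q" by (rule pairing_sym)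
  show "in_left_ideal L P" if "\<forall>Q. pairing P Q = 0" using pairing_nondegenerate[OF that] .
  show "theta (pairing P Q) = pairing (theta_op P) Q + pairing P (theta_op Q)"
    by (simp add: pairing_theta_op_left)
  show "pairing P Q = 0" if "i < n" "in_Fil L i P" "in_Fil L (n - i) Q"
    using pairing_Fil[OF that] .
qed

end

theorem theorem1p2:
  fixes L :: "'k::field_char_0 poly fract poly" and n :: nat
  assumes "n \<ge> 1" and "degree L = n" and "coeff L n = 1"
  shows "(\<exists>\<beta>. beta_factor L \<beta> \<and> self_adjoint_wrt L \<beta>) \<longleftrightarrow> polarizable L"
proof
  interpret monic_operator L n using assms by unfold_locales
  assume "\<exists>\<beta>. beta_factor L \<beta> \<and> self_adjoint_wrt L \<beta>"
  then obtain \<beta> where "beta_factor L \<beta>" and "self_adjoint_wrt L \<beta>" by blast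
  then have "\<beta> \<noteq> 0" by (simp add: beta_factor_def)
  interpret annihilated_functional L n "inverse \<beta>"
    using \<open>\<beta> \<noteq> 0\<close> Dual_act_L_if_self_adjoint[OF \<open>self_adjoint_wrt L \<beta>\<close>]
    by unfold_locales simp_all
  show "polarizable L" unfolding polarizable_def using polarization_pairing by blast
next
  assume "polarizable L"
  then obtain B where "polarization L B" unfolding polarizable_def ..
  then interpret polarized_operator L n B using assms by unfold_locales
  show "\<exists>\<beta>. beta_factor L \<beta> \<and> self_adjoint_wrt L \<beta>" by (rule self_adjoint_beta_factor)
qed

end
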